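(* Let $Q=\{1,2,\dots,p\}$ and, for every $q\in Q$, let $f_q:\mathbb{R}^n\to\mathbb{R}$ be a convex function and $C_q\subset\mathbb{R}^n$ a nonempty closed convex set; set $M_q(x)=\partial f_q(x)+N_{C_q}(x)$ and $A_q:=\operatorname{arg\,min}_{x\in C_q}f_q(x)$. Suppose $A:=\bigcap_{q\in Q}A_q$ is nonempty. Given a switching signal $\sigma:[0,\infty)\to Q$, let $$Q_\infty(\sigma):=\{q\in Q\mid \mu(T_q(\sigma))=\infty\},\qquad A_\infty(\sigma):=\bigcap_{q\in Q_\infty(\sigma)}A_q,$$ where $T_q(\sigma):=\{t\in[0,\infty)\mid\sigma(t)=q\}$ and $\mu$ is Lebesgue measure. Then every complete solution $\phi$ of the switching system $\dot x\in -M_{\sigma(t)}(x)$ is such that $\lim_{t\to\infty}\phi(t)$ exists and belongs to $A_\infty(\sigma)$.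
   Context: $\partial f_q(x)$ denotes the convex-analysis subdifferential $\{y\in\mathbb{R}^n \mid f_q(x')\ge f_q(x)+y\cdot(x'-x)\ \forall x'\in\mathbb{R}^n\}$. $N_{C}(x)$ is the normal cone $\{v\in\mathbb{R}^n\mid v\cdot(x'-x)\le 0\ \forall x'\in C\}$ if $x\in C$, and $N_C(x)=\emptyset$ if $x\notin C$. A switching signal is a function $\sigma:[0,\infty)\to Q$ for which there is a sequence $0=t_0<t_1<t_2<\dots$ (with $t_j\to\infty$) such that $\sigma$ is constant on each $[t_j,t_{j+1})$. Given $\sigma$, a solution is a locally absolutely continuous function $\phi:\operatorname{dom}\phi\to\mathbb{R}^n$, with $\operatorname{dom}\phi$ equal to $[0,T)$, $[0,T]$ or $[0,\infty)$, such that $\dot\phi(t)\in -M_{\sigma(t)}(\phi(t))$ for almost every $t\in\operatorname{dom}\phi$. A solution is complete if $\operatorname{dom}\phi=[0,\infty)$. *)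

theory Defs
  imports "HOL-Analysis.Analysis"
begin

definition subdiff :: "('a::real_inner \<Rightarrow> real) \<Rightarrow> 'a \<Rightarrow> 'a set" where
  "subdiff f x = {y. \<forall>x'. f x' \<ge> f x + y \<bullet> (x' - x)}"

definition normal_cone :: "'a::real_inner set \<Rightarrow> 'a \<Rightarrow> 'a set" where
  "normal_cone C x = (if x \<in> C then {v. \<forall>x'\<in>C. v \<bullet> (x' - x) \<le> 0} else {})"

definition Mop :: "('a::real_inner \<Rightarrow> real) \<Rightarrow> 'a set \<Rightarrow> 'a \<Rightarrow> 'a set" where
  "Mop f C x = {a + b | a b. a \<in> subdiff f x \<and> b \<in> normal_cone C x}"

definition argmin_on :: "('a \<Rightarrow> real) \<Rightarrow> 'a set \<Rightarrow> 'a set" where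
  "argmin_on f C = {x \<in> C. \<forall>y\<in>C. f x \<le> f y}"

definition abs_continuous_on :: "real \<Rightarrow> real \<Rightarrow> (real \<Rightarrow> 'a::real_normed_vector) \<Rightarrow> bool" where
  "abs_continuous_on a b f \<longleftrightarrow>
    (\<forall>\<epsilon>>0. \<exists>\<delta>>0. \<forall>(n::nat) (u::nat \<Rightarrow> real) (v::nat \<Rightarrow> real).
       (\<forall>k<n. a \<le> u k \<and> u k \<le> v k \<and> v k \<le> b) \<and>
       (\<forall>i<n. \<forall>j<n. i \<noteq> j \<longrightarrow> v i \<le> u j \<or> v j \<le> u i) \<and>
       (\<Sum>k<n. v k - u k) < \<delta>
       \<longrightarrow> (\<Sum>k<n. norm (f (v k) - f (u k))) < \<epsilon>)"

definition loc_abs_continuous :: "(real \<Rightarrow> 'a::real_normed_vector) \<Rightarrow> bool" where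
  "loc_abs_continuous f \<longleftrightarrow> (\<forall>T\<ge>0. abs_continuous_on 0 T f)"

definition switching_signal :: "'q set \<Rightarrow> (real \<Rightarrow> 'q) \<Rightarrow> bool" where
  "switching_signal Q \<sigma> \<longleftrightarrow> (\<forall>t\<ge>0. \<sigma> t \<in> Q) \<and>
     (\<exists>s::nat \<Rightarrow> real. s 0 = 0 \<and> strict_mono s \<and> filterlim s at_top sequentially \<and>
        (\<forall>j. \<forall>t\<in>{s j..<s (Suc j)}. \<sigma> t = \<sigma> (s j)))"

definition complete_solution ::
    "('q \<Rightarrow> 'a \<Rightarrow> 'a set) \<Rightarrow> (real \<Rightarrow> 'q) \<Rightarrow> (real \<Rightarrow> 'a::euclidean_space) \<Rightarrow> bool" where
  "complete_solution M \<sigma> \<phi> \<longleftrightarrow> loc_abs_continuous \<phi> \<and>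
     (AE t in lebesgue. t \<ge> 0 \<longrightarrow>
        (\<exists>v. (\<phi> has_vector_derivative v) (at t) \<and> - v \<in> M (\<sigma> t) (\<phi> t)))"

end

theory Submission
  imports Defs
begin

(* Fix a common minimizer z.  Along the flow |\<phi> - z|\<^sup>2 is nonincreasing (Fejer monotonicity),
   so \<phi> is bounded and has a cluster point y.  Near y also |\<phi> - y|\<^sup>2 + 2 |\<phi> - z|\<^sup>2 is
   nonincreasing.  Once \<phi> is close to y and |\<phi> - z|\<^sup>2 has almost stopped decreasing, \<phi> is
   therefore trapped near y, so it converges to y.
   If mode q is active for an infinite amount of time, then y \<in> C q (otherwise \<phi> would eventually
   stay outside C q, where mode q cannot be active) and f q y \<le> f q z (otherwise |\<phi> - z|\<^sup>2 would
   decrease at a fixed rate during an infinite amount of time).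
   Each monotonicity statement comes from an a.e. bound on the derivative of an absolutely
   continuous function; that such a bound implies monotonicity is proved via Lusin's property (N). *)

section \<open>Absolutely continuous functions\<close>

definition nonoverlapping_intervals ::
    "real \<Rightarrow> real \<Rightarrow> 'i set \<Rightarrow> ('i \<Rightarrow> real) \<Rightarrow> ('i \<Rightarrow> real) \<Rightarrow> bool" where
  "nonoverlapping_intervals a b I u v \<longleftrightarrow>
     (\<forall>i\<in>I. a \<le> u i \<and> u i \<le> v i \<and> v i \<le> b) \<and>
     (\<forall>i\<in>I. \<forall>j\<in>I. i \<noteq> j \<longrightarrow> v i \<le> u j \<or> v j \<le> u i)"

lemma nonoverlapping_intervals_mono:
  assumes "nonoverlapping_intervals c d I u v" "a \<le> c" "d \<le> b"
  shows "nonoverlapping_intervals a b I u v"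
  using assms unfolding nonoverlapping_intervals_def by force

lemma abs_continuous_on_iff:
  "abs_continuous_on a b f \<longleftrightarrow>
    (\<forall>e>0. \<exists>\<delta>>0. \<forall>(n::nat) u v. nonoverlapping_intervals a b {..<n} u v \<longrightarrow> (\<Sum>k<n. v k - u k) < \<delta> \<longrightarrow>
       (\<Sum>k<n. norm (f (v k) - f (u k))) < e)"
  by (simp add: abs_continuous_on_def nonoverlapping_intervals_def Ball_def imp_conjL)

lemma abs_continuous_onE:
  assumes "abs_continuous_on a b f" "e > 0"
  obtains \<delta> where "\<delta> > 0"
    "\<And>(I :: 'i set) u v. finite I \<Longrightarrow> nonoverlapping_intervals a b I u v \<Longrightarrow>
       (\<Sum>i\<in>I. v i - u i) < \<delta> \<Longrightarrow> (\<Sum>i\<in>I. norm (f (v i) - f (u i))) < e"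
proof -
  obtain \<delta> where "\<delta> > 0" and \<delta>: "\<And>(n::nat) u v. nonoverlapping_intervals a b {..<n} u v \<Longrightarrow>
      (\<Sum>k<n. v k - u k) < \<delta> \<Longrightarrow> (\<Sum>k<n. norm (f (v k) - f (u k))) < e"
    using assms(1)[unfolded abs_continuous_on_iff, rule_format, OF assms(2)] by blast
  show thesis
  proof (rule that[OF \<open>\<delta> > 0\<close>])
    fix I :: "'i set" and u v
    assume "finite I" and I: "nonoverlapping_intervals a b I u v" "(\<Sum>i\<in>I. v i - u i) < \<delta>"
    obtain g where "bij_betw g {0..<card I} I"
      using ex_bij_betw_nat_finite[OF \<open>finite I\<close>] by blast
    then have g: "bij_betw g {..<card I} I"
      by (simp add: atLeast0LessThan)
    have "g k \<in> I" if "k < card I" for k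
      using bij_betwE[OF g] that by blast
    moreover have "g k \<noteq> g k'" if "k < card I" "k' < card I" "k \<noteq> k'" for k k'
      using bij_betw_imp_inj_on[OF g] that by (auto simp: inj_on_def)
    ultimately have "nonoverlapping_intervals a b {..<card I} (u \<circ> g) (v \<circ> g)"
      using I(1) unfolding nonoverlapping_intervals_def by auto
    moreover have "(\<Sum>k<card I. (v \<circ> g) k - (u \<circ> g) k) < \<delta>"
      using I(2) sum.reindex_bij_betw[OF g, of "\<lambda>i. v i - u i"] by simp
    ultimately have "(\<Sum>k<card I. norm (f ((v \<circ> g) k) - f ((u \<circ> g) k))) < e"
      by (rule \<delta>[of "card I" "u \<circ> g" "v \<circ> g"])
    then show "(\<Sum>i\<in>I. norm (f (v i) - f (u i))) < e"
      using sum.reindex_bij_betw[OF g, of "\<lambda>i. norm (f (v i) - f (u i))"] by simp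
  qed
qed

lemma abs_continuous_onI:
  assumes "\<And>e. e > 0 \<Longrightarrow> \<exists>\<delta>>0. \<forall>(n::nat) u v. nonoverlapping_intervals a b {..<n} u v \<longrightarrow>
             (\<Sum>k<n. v k - u k) < \<delta> \<longrightarrow> (\<Sum>k<n. norm (f (v k) - f (u k))) < e"
  shows "abs_continuous_on a b f"
  unfolding abs_continuous_on_iff using assms by (intro allI impI)

lemma abs_continuous_on_subinterval:
  assumes "abs_continuous_on a b f" "a \<le> c" "d \<le> b"
  shows "abs_continuous_on c d f"
proof (rule abs_continuous_onI)
  fix e :: real assume "e > 0"
  obtain \<delta> where "\<delta> > 0" and \<delta>: "\<And>(I :: nat set) u v. finite I \<Longrightarrow>
      nonoverlapping_intervals a b I u v \<Longrightarrow> (\<Sum>i\<in>I. v i - u i) < \<delta> \<Longrightarrow>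
      (\<Sum>i\<in>I. norm (f (v i) - f (u i))) < e"
    using abs_continuous_onE[OF assms(1) \<open>e > 0\<close>] by blast
  show "\<exists>\<delta>>0. \<forall>(n::nat) u v. nonoverlapping_intervals c d {..<n} u v \<longrightarrow>
      (\<Sum>k<n. v k - u k) < \<delta> \<longrightarrow> (\<Sum>k<n. norm (f (v k) - f (u k))) < e"
  proof (intro exI conjI allI impI)
    fix n :: nat and u v
    assume "nonoverlapping_intervals c d {..<n} u v" "(\<Sum>k<n. v k - u k) < \<delta>"
    then show "(\<Sum>k<n. norm (f (v k) - f (u k))) < e"
      using \<delta>[of "{..<n}"] nonoverlapping_intervals_mono[OF _ assms(2,3)] by blast
  qed (fact \<open>\<delta> > 0\<close>)
qed

lemma abs_continuous_on_imp_continuous_on: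
  assumes "abs_continuous_on a b f"
  shows "continuous_on {a..b} f"
  unfolding continuous_on_iff
proof (intro ballI allI impI)
  fix x e :: real assume x: "x \<in> {a..b}" and "e > 0"
  obtain \<delta> where "\<delta> > 0" and \<delta>: "\<And>(I :: unit set) u v. finite I \<Longrightarrow>
      nonoverlapping_intervals a b I u v \<Longrightarrow> (\<Sum>i\<in>I. v i - u i) < \<delta> \<Longrightarrow>
      (\<Sum>i\<in>I. norm (f (v i) - f (u i))) < e"
    using abs_continuous_onE[OF assms \<open>e > 0\<close>] by blast
  show "\<exists>d>0. \<forall>y\<in>{a..b}. dist y x < d \<longrightarrow> dist (f y) (f x) < e"
  proof (intro exI conjI ballI impI)
    fix y assume "y \<in> {a..b}" "dist y x < \<delta>"
    then have "norm (f (max x y) - f (min x y)) < e"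
      using x \<delta>[of "{()}" "\<lambda>_. min x y" "\<lambda>_. max x y"]
      by (simp add: nonoverlapping_intervals_def dist_real_def)
    then show "dist (f y) (f x) < e"
      by (cases "x \<le> y") (simp_all add: dist_norm norm_minus_commute)
  qed (fact \<open>\<delta> > 0\<close>)
qed

lemma abs_continuous_on_dominated:
  assumes "abs_continuous_on a b f"
    and "\<And>s t. s \<in> {a..b} \<Longrightarrow> t \<in> {a..b} \<Longrightarrow> norm (g t - g s) \<le> L * norm (f t - f s)"
  shows "abs_continuous_on a b g"
proof (rule abs_continuous_onI)
  fix e :: real assume "e > 0"
  define L' where "L' = \<bar>L\<bar> + 1"
  have "L' > 0" by (simp add: L'_def)
  obtain \<delta> where "\<delta> > 0" and \<delta>: "\<And>(I :: nat set) u v. finite I \<Longrightarrow>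
      nonoverlapping_intervals a b I u v \<Longrightarrow> (\<Sum>i\<in>I. v i - u i) < \<delta> \<Longrightarrow>
      (\<Sum>i\<in>I. norm (f (v i) - f (u i))) < e / L'"
    using abs_continuous_onE[OF assms(1) divide_pos_pos[OF \<open>e > 0\<close> \<open>L' > 0\<close>]] by blast
  show "\<exists>\<delta>>0. \<forall>(n::nat) u v. nonoverlapping_intervals a b {..<n} u v \<longrightarrow>
      (\<Sum>k<n. v k - u k) < \<delta> \<longrightarrow> (\<Sum>k<n. norm (g (v k) - g (u k))) < e"
  proof (intro exI conjI allI impI)
    fix n :: nat and u v
    assume uv: "nonoverlapping_intervals a b {..<n} u v" "(\<Sum>k<n. v k - u k) < \<delta>"
    have "(\<Sum>k<n. norm (g (v k) - g (u k))) \<le> (\<Sum>k<n. L' * norm (f (v k) - f (u k)))"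
    proof (rule sum_mono)
      fix k assume "k \<in> {..<n}"
      then have "a \<le> u k" "u k \<le> v k" "v k \<le> b"
        using uv(1) unfolding nonoverlapping_intervals_def by auto
      then have "u k \<in> {a..b}" "v k \<in> {a..b}"
        by auto
      then have "norm (g (v k) - g (u k)) \<le> L * norm (f (v k) - f (u k))"
        by (rule assms(2))
      also have "\<dots> \<le> L' * norm (f (v k) - f (u k))"
        unfolding L'_def by (intro mult_right_mono) auto
      finally show "norm (g (v k) - g (u k)) \<le> L' * norm (f (v k) - f (u k))" .
    qed
    also have "\<dots> = L' * (\<Sum>k<n. norm (f (v k) - f (u k)))"
      by (simp add: sum_distrib_left)
    also have "\<dots> < L' * (e / L')"
      using \<delta>[OF _ uv] \<open>L' > 0\<close> by (intro mult_strict_left_mono) auto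
    finally show "(\<Sum>k<n. norm (g (v k) - g (u k))) < e"
      using \<open>L' > 0\<close> by simp
  qed (fact \<open>\<delta> > 0\<close>)
qed

lemma abs_continuous_on_add:
  assumes "abs_continuous_on a b f" "abs_continuous_on a b g"
  shows "abs_continuous_on a b (\<lambda>t. f t + g t)"
proof (rule abs_continuous_onI)
  fix e :: real assume "e > 0"
  then have "e / 2 > 0" by simp
  obtain \<delta>1 where "\<delta>1 > 0" and \<delta>1: "\<And>(I :: nat set) u v. finite I \<Longrightarrow>
      nonoverlapping_intervals a b I u v \<Longrightarrow> (\<Sum>i\<in>I. v i - u i) < \<delta>1 \<Longrightarrow>
      (\<Sum>i\<in>I. norm (f (v i) - f (u i))) < e / 2"
    using abs_continuous_onE[OF assms(1) \<open>e / 2 > 0\<close>] by blast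
  obtain \<delta>2 where "\<delta>2 > 0" and \<delta>2: "\<And>(I :: nat set) u v. finite I \<Longrightarrow>
      nonoverlapping_intervals a b I u v \<Longrightarrow> (\<Sum>i\<in>I. v i - u i) < \<delta>2 \<Longrightarrow>
      (\<Sum>i\<in>I. norm (g (v i) - g (u i))) < e / 2"
    using abs_continuous_onE[OF assms(2) \<open>e / 2 > 0\<close>] by blast
  show "\<exists>\<delta>>0. \<forall>(n::nat) u v. nonoverlapping_intervals a b {..<n} u v \<longrightarrow>
      (\<Sum>k<n. v k - u k) < \<delta> \<longrightarrow> (\<Sum>k<n. norm (f (v k) + g (v k) - (f (u k) + g (u k)))) < e"
  proof (intro exI conjI allI impI)
    fix n :: nat and u v
    assume uv: "nonoverlapping_intervals a b {..<n} u v" "(\<Sum>k<n. v k - u k) < min \<delta>1 \<delta>2"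
    have "(\<Sum>k<n. norm (f (v k) + g (v k) - (f (u k) + g (u k))))
        \<le> (\<Sum>k<n. norm (f (v k) - f (u k))) + (\<Sum>k<n. norm (g (v k) - g (u k)))"
      unfolding sum.distrib[symmetric] by (intro sum_mono) (simp add: norm_diff_triangle_ineq)
    also have "\<dots> < e / 2 + e / 2"
      using uv by (intro add_strict_mono \<delta>1 \<delta>2) auto
    finally show "(\<Sum>k<n. norm (f (v k) + g (v k) - (f (u k) + g (u k)))) < e"
      by simp
  qed (use \<open>\<delta>1 > 0\<close> \<open>\<delta>2 > 0\<close> in auto)
qed

lemma abs_continuous_on_ident: "abs_continuous_on a b (\<lambda>t. t)"
proof (rule abs_continuous_onI)
  fix e :: real assume "e > 0"
  have "(\<Sum>k<n. norm (v k - u k)) = (\<Sum>k<n. v k - u k)"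
    if "nonoverlapping_intervals a b {..<n} u v" for n :: nat and u v
    using that unfolding nonoverlapping_intervals_def by (intro sum.cong) auto
  with \<open>e > 0\<close> show "\<exists>\<delta>>0. \<forall>(n::nat) u v. nonoverlapping_intervals a b {..<n} u v \<longrightarrow>
      (\<Sum>k<n. v k - u k) < \<delta> \<longrightarrow> (\<Sum>k<n. norm (v k - u k)) < e"
    by auto
qed

lemma abs_continuous_on_cmult:
  fixes f :: "real \<Rightarrow> real"
  assumes "abs_continuous_on a b f"
  shows "abs_continuous_on a b (\<lambda>t. c * f t)"
  by (rule abs_continuous_on_dominated[OF assms, of _ "\<bar>c\<bar>"])
    (simp flip: right_diff_distrib add: abs_mult)

lemma abs_continuous_on_norm_diff_power2:
  assumes "abs_continuous_on a b f"
  shows "abs_continuous_on a b (\<lambda>t. norm (f t - z)^2)"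
proof -
  have "continuous_on {a..b} (\<lambda>t. f t - z)"
    using abs_continuous_on_imp_continuous_on[OF assms] by (intro continuous_on_diff continuous_on_const)
  then have "bounded ((\<lambda>t. f t - z) ` {a..b})"
    by (intro compact_imp_bounded compact_continuous_image compact_Icc)
  then obtain R where R: "\<And>t. t \<in> {a..b} \<Longrightarrow> norm (f t - z) \<le> R"
    unfolding bounded_iff by blast
  show ?thesis
  proof (rule abs_continuous_on_dominated[OF assms, of _ "2 * R"])
    fix s t assume st: "s \<in> {a..b}" "t \<in> {a..b}"
    define A B where "A = norm (f t - z)" and "B = norm (f s - z)"
    have "\<bar>A - B\<bar> \<le> norm (f t - f s)"
      using norm_triangle_ineq3[of "f t - z" "f s - z"] by (simp add: A_def B_def)
    moreover have "0 \<le> A + B" "A + B \<le> 2 * R"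
      using R[OF st(1)] R[OF st(2)] by (simp_all add: A_def B_def)
    ultimately have "\<bar>A - B\<bar> * (A + B) \<le> norm (f t - f s) * (2 * R)"
      by (intro mult_mono) auto
    moreover have "A^2 - B^2 = (A - B) * (A + B)"
      by (simp add: power2_eq_square algebra_simps)
    ultimately show "norm (A^2 - B^2) \<le> 2 * R * norm (f t - f s)"
      using \<open>0 \<le> A + B\<close> by (simp add: abs_mult mult.commute)
  qed
qed

section \<open>Lusin's property (N)\<close>

lemma negligible_imp_small_open_superset:
  assumes "negligible N" "\<delta> > 0"
  obtains U where "open U" "N \<subseteq> U" "U \<in> lmeasurable" "measure lebesgue U < \<delta>"
proof -
  have N: "N \<in> null_sets lebesgue"
    using assms(1) negligible_iff_null_sets by blast
  obtain U where U: "open U" "N \<subseteq> U" "emeasure lebesgue (U - N) < ennreal \<delta>"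
    using sets_lebesgue_outer_open[OF null_setsD2[OF N] assms(2)] by blast
  have "U \<in> sets lebesgue"
    using U(1) by simp
  then have "emeasure lebesgue U < ennreal \<delta>"
    using U(3) emeasure_Diff_null_set[OF N] by simp
  then have "emeasure lebesgue U < \<infinity>"
    using ennreal_less_top[of \<delta>] unfolding infinity_ennreal_def by (rule order.strict_trans)
  with \<open>U \<in> sets lebesgue\<close> have "U \<in> lmeasurable"
    by (rule fmeasurableI)
  moreover have "measure lebesgue U < \<delta>"
    using emeasure_eq_measure2[OF \<open>U \<in> lmeasurable\<close>] \<open>emeasure lebesgue U < ennreal \<delta>\<close> \<open>\<delta> > 0\<close>
    by (simp add: ennreal_less_iff)
  ultimately show thesis
    using U(1,2) that by blast
qed

lemma disjoint_Ioo_imp_nonoverlapping: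
  fixes l1 r1 l2 r2 :: real
  assumes "l1 < r1" "l2 < r2" "{l1<..<r1} \<inter> {l2<..<r2} = {}"
  shows "r1 \<le> l2 \<or> r2 \<le> l1"
proof (rule ccontr)
  assume "\<not> ?thesis"
  then have "(max l1 l2 + min r1 r2) / 2 \<in> {l1<..<r1} \<inter> {l2<..<r2}"
    using assms(1,2) by auto
  with assms(3) show False by blast
qed


lemma measure_continuous_image_interval:
  fixes f :: "real \<Rightarrow> real"
  assumes "continuous_on {l..r} f" "l \<le> r"
  obtains u v where "l \<le> u" "u \<le> v" "v \<le> r" "f ` {l..r} \<in> lmeasurable"
    "measure lebesgue (f ` {l..r}) = \<bar>f v - f u\<bar>"
proof -
  obtain c d where cd: "f ` {l..r} = {c..d}" "c \<le> d"
    using continuous_image_closed_interval[OF assms(2,1)] by blast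
  then obtain x y where "x \<in> {l..r}" "y \<in> {l..r}" "f x = c" "f y = d"
    by (metis atLeastAtMost_iff imageE order_refl)
  then show thesis
    using cd that[of "min x y" "max x y"] by (cases "x \<le> y") auto
qed

lemma component_of_open_subset_Ioo:
  fixes U :: "real set"
  assumes "open U" "U \<subseteq> {a<..<b}" "K \<in> components U"
  shows "a \<le> Inf K" "Inf K < Sup K" "Sup K \<le> b" "K = {Inf K<..<Sup K}"
proof -
  have "open K" "K \<noteq> {}" "is_interval K"
    using assms open_components in_components_nonempty in_components_connected
      is_interval_connected_1 by blast+
  have K: "K \<subseteq> {a<..<b}"
    using assms in_components_subset by blast
  then have "bounded K"
    using bounded_subset[OF bounded_Ioo] by blast
  then have bdd: "bdd_below K" "bdd_above K"
    by (simp_all add: bounded_imp_bdd_below bounded_imp_bdd_above)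
  show K_eq: "K = {Inf K<..<Sup K}"
  proof
    show "K \<subseteq> {Inf K<..<Sup K}"
    proof
      fix x assume "x \<in> K"
      with \<open>open K\<close> obtain d where "d > 0" "ball x d \<subseteq> K"
        by (meson open_contains_ball)
      then have "x - d / 2 \<in> K" "x + d / 2 \<in> K"
        by (auto simp: dist_real_def subset_iff)
      then show "x \<in> {Inf K<..<Sup K}"
        using bdd \<open>d > 0\<close> cInf_lower[of _ K] cSup_upper[of _ K] by fastforce
    qed
    show "{Inf K<..<Sup K} \<subseteq> K"
    proof
      fix y assume "y \<in> {Inf K<..<Sup K}"
      then obtain x1 x2 where "x1 \<in> K" "x1 < y" "x2 \<in> K" "y < x2"
        using cInf_less_iff[OF \<open>K \<noteq> {}\<close> bdd(1)] less_cSup_iff[OF \<open>K \<noteq> {}\<close> bdd(2)] by auto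
      then show "y \<in> K"
        using \<open>is_interval K\<close> unfolding is_interval_1 by (meson less_imp_le)
    qed
  qed
  show "a \<le> Inf K" "Sup K \<le> b"
    using K \<open>K \<noteq> {}\<close> by (auto intro!: cInf_greatest cSup_least)
  show "Inf K < Sup K"
  proof (rule ccontr)
    assume "\<not> Inf K < Sup K"
    then have "{Inf K<..<Sup K} = {}"
      by auto
    with K_eq \<open>K \<noteq> {}\<close> show False
      by simp
  qed
qed

lemma components_nonoverlapping:
  fixes U :: "real set"
  assumes U: "open U" "U \<subseteq> {a<..<b}" and K: "K \<in> components U" "K' \<in> components U" "K \<noteq> K'"
  shows "Sup K \<le> Inf K' \<or> Sup K' \<le> Inf K"
proof (rule disjoint_Ioo_imp_nonoverlapping)
  show "Inf K < Sup K" "Inf K' < Sup K'"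
    using component_of_open_subset_Ioo(2)[OF U] K(1,2) by blast+
  have "K \<inter> K' = {}"
    using components_nonoverlap K by blast
  then show "{Inf K<..<Sup K} \<inter> {Inf K'<..<Sup K'} = {}"
    using component_of_open_subset_Ioo(4)[OF U K(1), symmetric]
      component_of_open_subset_Ioo(4)[OF U K(2), symmetric] by simp
qed

lemma measure_image_closure_component:
  fixes f :: "real \<Rightarrow> real"
  assumes f: "continuous_on {a..b} f" and U: "open U" "U \<subseteq> {a<..<b}" and K: "K \<in> components U"
  obtains u v where "Inf K \<le> u" "u \<le> v" "v \<le> Sup K" "f ` closure K \<in> lmeasurable"
    "measure lebesgue (f ` closure K) = \<bar>f v - f u\<bar>"
proof -
  note K_props = component_of_open_subset_Ioo[OF U K]
  from K_props(4) have "closure K = closure {Inf K<..<Sup K}"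
    by (rule arg_cong)
  also have "\<dots> = {Inf K..Sup K}"
    using K_props(2) by simp
  finally have "closure K = {Inf K..Sup K}" .
  moreover have "continuous_on {Inf K..Sup K} f"
    by (rule continuous_on_subset[OF f]) (use K_props in auto)
  ultimately show thesis
    using measure_continuous_image_interval[of "Inf K" "Sup K" f] K_props(2) that by auto
qed

lemma countable_components_open:
  fixes U :: "'a::euclidean_space set"
  assumes "open U"
  shows "countable (components U)"
proof (rule countable_disjoint_open_subsets)
  show "open K" if "K \<in> components U" for K
    using that assms open_components by blast
  show "pairwise disjnt (components U)"
    using pairwise_disjoint_components[of U] unfolding pairwise_def disjnt_def by blast
qed

lemma sum_measure_components_le:
  fixes U :: "'a::euclidean_space set"
  assumes "open U" "bounded U" "G \<subseteq> components U" "finite G"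
  shows "(\<Sum>K\<in>G. measure lebesgue K) \<le> measure lebesgue U"
proof -
  have "(\<Sum>K\<in>G. measure lebesgue K) = measure lebesgue (\<Union>G)"
  proof (rule measure_Union'[symmetric])
    show "K \<in> lmeasurable" if "K \<in> G" for K
      using that assms in_components_subset[of K U] open_components[of U K]
      by (intro lmeasurable_open bounded_subset[OF \<open>bounded U\<close>]) auto
    show "pairwise disjnt G"
      using assms(3) pairwise_disjoint_components[of U]
      unfolding pairwise_def disjnt_def by blast
  qed (fact assms(4))
  also have "\<dots> \<le> measure lebesgue U"
  proof (rule measure_mono_fmeasurable)
    show "\<Union>G \<subseteq> U"
      using assms(3) in_components_subset by blast
    have "open (\<Union>G)"
      using assms(1,3) open_components by blast
    then show "\<Union>G \<in> sets lebesgue"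
      by simp
  qed (use assms(1,2) lmeasurable_open in blast)
  finally show ?thesis .
qed

lemma components_interval_witnesses:
  fixes f :: "real \<Rightarrow> real"
  assumes f: "continuous_on {a..b} f" and U: "open U" "U \<subseteq> {a<..<b}" and G: "G \<subseteq> components U"
  obtains u v where "nonoverlapping_intervals a b G u v"
    "\<And>K. K \<in> G \<Longrightarrow> v K - u K \<le> measure lebesgue K"
    "\<And>K. K \<in> G \<Longrightarrow> f ` closure K \<in> lmeasurable"
    "\<And>K. K \<in> G \<Longrightarrow> measure lebesgue (f ` closure K) = \<bar>f (v K) - f (u K)\<bar>"
proof -
  note K_props = component_of_open_subset_Ioo[OF U]
  have "\<forall>K\<in>G. \<exists>p. Inf K \<le> fst p \<and> fst p \<le> snd p \<and> snd p \<le> Sup K \<and> f ` closure K \<in> lmeasurable \<and>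
      measure lebesgue (f ` closure K) = \<bar>f (snd p) - f (fst p)\<bar>"
  proof
    fix K assume "K \<in> G"
    with G obtain u v where "Inf K \<le> u" "u \<le> v" "v \<le> Sup K" "f ` closure K \<in> lmeasurable"
        "measure lebesgue (f ` closure K) = \<bar>f v - f u\<bar>"
      using measure_image_closure_component[OF f U] by blast
    then show "\<exists>p. Inf K \<le> fst p \<and> fst p \<le> snd p \<and> snd p \<le> Sup K \<and> f ` closure K \<in> lmeasurable \<and>
        measure lebesgue (f ` closure K) = \<bar>f (snd p) - f (fst p)\<bar>"
      by (intro exI[of _ "(u, v)"]) simp
  qed
  then obtain p where p: "\<forall>K\<in>G. Inf K \<le> fst (p K) \<and> fst (p K) \<le> snd (p K) \<and> snd (p K) \<le> Sup K \<and>
      f ` closure K \<in> lmeasurable \<and> measure lebesgue (f ` closure K) = \<bar>f (snd (p K)) - f (fst (p K))\<bar>"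
    by (rule bchoice[THEN exE])
  define u v where "u K = fst (p K)" and "v K = snd (p K)" for K
  have uv: "Inf K \<le> u K" "u K \<le> v K" "v K \<le> Sup K" "f ` closure K \<in> lmeasurable"
    "measure lebesgue (f ` closure K) = \<bar>f (v K) - f (u K)\<bar>" if "K \<in> G" for K
    using p that by (simp_all add: u_def v_def)
  have "a \<le> u K \<and> u K \<le> v K \<and> v K \<le> b" if "K \<in> G" for K
    using K_props(1,3)[of K] uv[OF that] that G by force
  moreover have "v K \<le> u K' \<or> v K' \<le> u K" if "K \<in> G" "K' \<in> G" "K \<noteq> K'" for K K'
    using components_nonoverlapping[OF U, of K K'] uv[OF that(1)] uv[OF that(2)] that G by force
  ultimately have "nonoverlapping_intervals a b G u v"
    unfolding nonoverlapping_intervals_def by blast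
  moreover have "v K - u K \<le> measure lebesgue K" if "K \<in> G" for K
  proof -
    have "K \<in> components U"
      using that G by blast
    from K_props(4)[OF this] have "measure lebesgue K = measure lebesgue {Inf K<..<Sup K}"
      by (rule arg_cong)
    with K_props(2)[OF \<open>K \<in> components U\<close>] uv[OF that] show ?thesis
      by simp
  qed
  ultimately show thesis
    using uv(4,5) that by blast
qed

lemma abs_continuous_on_measure_image_components:
  fixes f :: "real \<Rightarrow> real"
  assumes f: "abs_continuous_on a b f" and "e > 0"
  obtains \<delta> where "\<delta> > 0" "\<And>U G. open U \<Longrightarrow> U \<subseteq> {a<..<b} \<Longrightarrow> measure lebesgue U < \<delta> \<Longrightarrow>
    G \<subseteq> components U \<Longrightarrow> finite G \<Longrightarrow> measure lebesgue (\<Union>K\<in>G. f ` closure K) \<le> e"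
proof -
  obtain \<delta> where "\<delta> > 0" and small: "\<And>(I :: real set set) u v. finite I \<Longrightarrow>
      nonoverlapping_intervals a b I u v \<Longrightarrow> (\<Sum>i\<in>I. v i - u i) < \<delta> \<Longrightarrow>
      (\<Sum>i\<in>I. norm (f (v i) - f (u i))) < e"
    using abs_continuous_onE[OF f \<open>e > 0\<close>] by blast
  have f_cont: "continuous_on {a..b} f"
    using f by (rule abs_continuous_on_imp_continuous_on)
  show thesis
  proof (rule that[OF \<open>\<delta> > 0\<close>])
    fix U G assume U: "open U" "U \<subseteq> {a<..<b}" "measure lebesgue U < \<delta>"
      and G: "G \<subseteq> components U" "finite G"
    obtain u v where uv: "nonoverlapping_intervals a b G u v"
      "\<And>K. K \<in> G \<Longrightarrow> v K - u K \<le> measure lebesgue K"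
      "\<And>K. K \<in> G \<Longrightarrow> f ` closure K \<in> lmeasurable"
      "\<And>K. K \<in> G \<Longrightarrow> measure lebesgue (f ` closure K) = \<bar>f (v K) - f (u K)\<bar>"
      using components_interval_witnesses[OF f_cont U(1,2) G(1)] by blast
    have "(\<Sum>K\<in>G. v K - u K) \<le> (\<Sum>K\<in>G. measure lebesgue K)"
      using uv(2) by (rule sum_mono)
    also have "\<dots> \<le> measure lebesgue U"
      using U(1,2) G by (intro sum_measure_components_le bounded_subset[OF bounded_Ioo])
    finally have "(\<Sum>K\<in>G. v K - u K) < \<delta>"
      using U(3) by linarith
    with G(2) uv(1) have "(\<Sum>K\<in>G. norm (f (v K) - f (u K))) < e"
      by (rule small)
    moreover have "measure lebesgue (\<Union>K\<in>G. f ` closure K) \<le> (\<Sum>K\<in>G. measure lebesgue (f ` closure K))"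
      using G(2) uv(3) by (intro measure_UNION_le) auto
    moreover have "(\<Sum>K\<in>G. measure lebesgue (f ` closure K)) = (\<Sum>K\<in>G. norm (f (v K) - f (u K)))"
      using uv(4) by (intro sum.cong) auto
    ultimately show "measure lebesgue (\<Union>K\<in>G. f ` closure K) \<le> e"
      by linarith
  qed
qed

lemma abs_continuous_on_negligible_image:
  fixes f :: "real \<Rightarrow> real"
  assumes f: "abs_continuous_on a b f" and N: "N \<subseteq> {a<..<b}" "negligible N"
  shows "negligible (f ` N)"
  unfolding negligible_outer_le
proof (intro allI impI)
  fix e :: real assume "e > 0"
  obtain \<delta> where "\<delta> > 0" and \<delta>: "\<And>U G. open U \<Longrightarrow> U \<subseteq> {a<..<b} \<Longrightarrow>
      measure lebesgue U < \<delta> \<Longrightarrow> G \<subseteq> components U \<Longrightarrow> finite G \<Longrightarrow>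
      measure lebesgue (\<Union>K\<in>G. f ` closure K) \<le> e"
    using abs_continuous_on_measure_image_components[OF f \<open>e > 0\<close>] by blast
  obtain U0 where U0: "open U0" "N \<subseteq> U0" "U0 \<in> lmeasurable" "measure lebesgue U0 < \<delta>"
    using negligible_imp_small_open_superset[OF N(2) \<open>\<delta> > 0\<close>] .
  define U where "U = U0 \<inter> {a<..<b}"
  have U: "open U" "N \<subseteq> U" "U \<subseteq> {a<..<b}"
    using U0(1,2) N(1) by (auto simp: U_def)
  have "measure lebesgue U \<le> measure lebesgue U0"
    using U(1) U0(3) by (intro measure_mono_fmeasurable) (auto simp: U_def)
  with U0(4) have "measure lebesgue U < \<delta>"
    by linarith
  have f_cont: "continuous_on {a..b} f"
    using f by (rule abs_continuous_on_imp_continuous_on)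
  note countable = countable_components_open[OF U(1)]
  have measurable: "f ` closure K \<in> lmeasurable" if "K \<in> components U" for K
    using measure_image_closure_component[OF f_cont U(1,3) that] by blast
  note bound = \<delta>[OF U(1,3) \<open>measure lebesgue U < \<delta>\<close>]
  have "(\<Union>K\<in>components U. f ` closure K) \<in> lmeasurable"
    by (rule fmeasurable_UN_bound[OF countable measurable bound])
  moreover have "measure lebesgue (\<Union>K\<in>components U. f ` closure K) \<le> e"
    by (rule measure_UN_bound[OF countable measurable bound])
  moreover have "f ` N \<subseteq> (\<Union>K\<in>components U. f ` closure K)"
  proof
    fix y assume "y \<in> f ` N"
    then obtain x where "x \<in> N" "y = f x"
      by blast
    then obtain K where "K \<in> components U" "x \<in> K"
      using U(2) Union_components[of U] by blast
    with \<open>y = f x\<close> closure_subset show "y \<in> (\<Union>K\<in>components U. f ` closure K)"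
      by blast
  qed
  ultimately show "\<exists>T. f ` N \<subseteq> T \<and> T \<in> lmeasurable \<and> measure lebesgue T \<le> e"
    by blast
qed

section \<open>Monotonicity from almost-everywhere derivative bounds\<close>

lemma first_exit_time:
  fixes g :: "real \<Rightarrow> real"
  assumes g: "continuous_on {a..b} g" and "g a < c" "c \<le> g b" "a \<le> b"
  obtains \<tau> where "a < \<tau>" "\<tau> \<le> b" "g \<tau> = c" "\<And>t. a \<le> t \<Longrightarrow> t < \<tau> \<Longrightarrow> g t < c"
proof -
  define S where "S = {t \<in> {a..b}. c \<le> g t}"
  define \<tau> where "\<tau> = Inf S"
  have "closed S"
    unfolding S_def using g by (rule continuous_on_closed_Collect_le[OF continuous_on_const _ closed_atLeastAtMost])
  moreover have "b \<in> S" "bdd_below S"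
    using assms(3,4) by (auto simp: S_def intro: bdd_belowI[of _ a])
  ultimately have "\<tau> \<in> S"
    unfolding \<tau>_def using closed_contains_Inf by blast
  then have "a \<le> \<tau>" "\<tau> \<le> b" "c \<le> g \<tau>"
    by (simp_all add: S_def)
  have before: "g t < c" if "a \<le> t" "t < \<tau>" for t
  proof (rule ccontr)
    assume "\<not> g t < c"
    with that \<open>\<tau> \<le> b\<close> have "t \<in> S"
      by (simp add: S_def)
    then have "\<tau> \<le> t"
      unfolding \<tau>_def using \<open>bdd_below S\<close> by (rule cInf_lower)
    with that show False
      by simp
  qed
  have "continuous_on {a..\<tau>} g"
    using g by (rule continuous_on_subset) (use \<open>\<tau> \<le> b\<close> in auto)
  then have "\<exists>t. a \<le> t \<and> t \<le> \<tau> \<and> g t = c"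
    using \<open>g a < c\<close> \<open>c \<le> g \<tau>\<close> \<open>a \<le> \<tau>\<close> by (intro IVT') auto
  then obtain t where "a \<le> t" "t \<le> \<tau>" "g t = c"
    by blast
  with before have "t = \<tau>"
    by (meson less_irrefl order.not_eq_order_implies_strict)
  with \<open>g t = c\<close> have "g \<tau> = c"
    by simp
  moreover have "a < \<tau>"
    using \<open>a \<le> \<tau>\<close> \<open>g a < c\<close> \<open>g \<tau> = c\<close> by (cases "a = \<tau>") auto
  ultimately show thesis
    using \<open>\<tau> \<le> b\<close> before that by blast
qed

lemma abs_continuous_on_nonincreasing_strict:
  fixes k :: "real \<Rightarrow> real"
  assumes k: "abs_continuous_on a b k" and "a \<le> b"
    and deriv: "AE t in lebesgue. a < t \<and> t < b \<longrightarrow> (\<exists>D. (k has_real_derivative D) (at t) \<and> D < 0)"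
  shows "k b \<le> k a"
proof (rule ccontr)
  assume "\<not> k b \<le> k a"
  define N where "N = {t \<in> {a<..<b}. \<not> (\<exists>D. (k has_real_derivative D) (at t) \<and> D < 0)}"
  have "negligible N"
  proof -
    obtain N0 where "negligible N0" and N0: "{t. \<not> (a < t \<and> t < b \<longrightarrow>
        (\<exists>D. (k has_real_derivative D) (at t) \<and> D < 0))} \<subseteq> N0"
      using deriv unfolding eventually_ae_filter_negligible by blast
    have "N \<subseteq> N0"
      using N0 by (auto simp: N_def)
    with \<open>negligible N0\<close> show ?thesis
      by (rule negligible_subset)
  qed
  then have "negligible (k ` N)"
    by (rule abs_continuous_on_negligible_image[OF k, rotated]) (auto simp: N_def)
  have "\<not> {k a<..<k b} \<subseteq> k ` N"
  proof
    assume "{k a<..<k b} \<subseteq> k ` N"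
    with \<open>negligible (k ` N)\<close> have "negligible {k a<..<k b}"
      by (rule negligible_subset)
    with \<open>\<not> k b \<le> k a\<close> show False
      by (simp add: negligible_iff_measure)
  qed
  then obtain y where "y \<in> {k a<..<k b}" "y \<notin> k ` N"
    by blast
  then have y: "k a < y" "y < k b" "y \<notin> k ` N"
    by simp_all
  \<comment> \<open>At the first time \<tau> at which k reaches the level y, k is differentiable with negative
    derivative, because y avoids the image of the bad set N; so k exceeds y just before \<tau>.\<close>
  obtain \<tau> where \<tau>: "a < \<tau>" "\<tau> \<le> b" "k \<tau> = y" and below: "\<And>t. a \<le> t \<Longrightarrow> t < \<tau> \<Longrightarrow> k t < y"
    using first_exit_time[OF abs_continuous_on_imp_continuous_on[OF k] y(1) _ \<open>a \<le> b\<close>] y(2) by auto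
  have "\<tau> < b"
    using \<tau> y(2) by (cases "\<tau> = b") auto
  have "\<tau> \<notin> N"
    using \<tau>(3) y(3) by auto
  then obtain D where "(k has_real_derivative D) (at \<tau>)" "D < 0"
    using \<tau>(1) \<open>\<tau> < b\<close> by (auto simp: N_def)
  then obtain d where "d > 0" and d: "\<And>s. s > 0 \<Longrightarrow> s < d \<Longrightarrow> k \<tau> < k (\<tau> - s)"
    using DERIV_neg_dec_left by blast
  define s where "s = min (d / 2) (\<tau> - a)"
  have "s > 0" "s < d" "a \<le> \<tau> - s"
    using \<open>d > 0\<close> \<tau>(1) by (auto simp: s_def)
  then have "y < k (\<tau> - s)"
    using d \<tau>(3) by auto
  moreover have "k (\<tau> - s) < y"
    using below \<open>a \<le> \<tau> - s\<close> \<open>s > 0\<close> by simp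
  ultimately show False
    by simp
qed

lemma abs_continuous_on_nonincreasing:
  fixes h :: "real \<Rightarrow> real"
  assumes h: "abs_continuous_on a b h" and "a \<le> b"
    and deriv: "AE t in lebesgue. a < t \<and> t < b \<longrightarrow> (\<exists>D. (h has_real_derivative D) (at t) \<and> D \<le> 0)"
  shows "h b \<le> h a"
proof (rule field_le_epsilon)
  fix e :: real assume "e > 0"
  define \<epsilon> where "\<epsilon> = e / (b - a + 1)"
  have "\<epsilon> > 0" "\<epsilon> * (b - a) \<le> e"
    using \<open>e > 0\<close> \<open>a \<le> b\<close> by (simp_all add: \<epsilon>_def field_simps)
  define k where "k t = h t + (- \<epsilon>) * t" for t
  have "abs_continuous_on a b k"
    unfolding k_def by (intro abs_continuous_on_add h abs_continuous_on_cmult abs_continuous_on_ident)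
  moreover note \<open>a \<le> b\<close>
  moreover have "AE t in lebesgue. a < t \<and> t < b \<longrightarrow> (\<exists>D. (k has_real_derivative D) (at t) \<and> D < 0)"
    using deriv
  proof eventually_elim
    case (elim t)
    show ?case
    proof
      assume "a < t \<and> t < b"
      with elim obtain D where "(h has_real_derivative D) (at t)" "D \<le> 0"
        by blast
      with \<open>\<epsilon> > 0\<close> show "\<exists>D. (k has_real_derivative D) (at t) \<and> D < 0"
        unfolding k_def by (intro exI[of _ "D - \<epsilon>"]) (auto intro!: derivative_eq_intros)
    qed
  qed
  ultimately have "k b \<le> k a"
    by (rule abs_continuous_on_nonincreasing_strict)
  then have "h b - h a \<le> \<epsilon> * (b - a)"
    by (simp add: k_def algebra_simps)
  with \<open>\<epsilon> * (b - a) \<le> e\<close> show "h b \<le> h a + e"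
    by linarith
qed

lemma abs_continuous_on_increment_le:
  fixes h :: "real \<Rightarrow> real"
  assumes h: "abs_continuous_on a b h" and "a \<le> b"
    and deriv: "AE t in lebesgue. a < t \<and> t < b \<longrightarrow> (\<exists>D. (h has_real_derivative D) (at t) \<and> D \<le> c)"
  shows "h b - h a \<le> c * (b - a)"
proof -
  define k where "k t = h t + (- c) * t" for t
  have k: "abs_continuous_on a b k"
    unfolding k_def by (intro abs_continuous_on_add h abs_continuous_on_cmult abs_continuous_on_ident)
  have "AE t in lebesgue. a < t \<and> t < b \<longrightarrow> (\<exists>D. (k has_real_derivative D) (at t) \<and> D \<le> 0)"
    using deriv
  proof eventually_elim
    case (elim t)
    show ?case
    proof
      assume "a < t \<and> t < b"
      with elim obtain D where "(h has_real_derivative D) (at t)" "D \<le> c"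
        by blast
      then show "\<exists>D. (k has_real_derivative D) (at t) \<and> D \<le> 0"
        unfolding k_def by (intro exI[of _ "D - c"]) (auto intro!: derivative_eq_intros)
    qed
  qed
  with k \<open>a \<le> b\<close> have "k b \<le> k a"
    by (rule abs_continuous_on_nonincreasing)
  then show ?thesis
    by (simp add: k_def algebra_simps)
qed

section \<open>Subgradient flows under switching\<close>

lemma Mop_variational_inequality:
  fixes x v :: "'a::real_inner"
  assumes "- v \<in> Mop f C x"
  shows "x \<in> C" and "z \<in> C \<Longrightarrow> v \<bullet> (x - z) \<le> f z - f x"
proof -
  obtain a b where ab: "- v = a + b" "a \<in> subdiff f x" "b \<in> normal_cone C x"
    using assms unfolding Mop_def by blast
  show "x \<in> C"
    using ab(3) unfolding normal_cone_def by (auto split: if_splits)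
  assume "z \<in> C"
  with ab(3) \<open>x \<in> C\<close> have "b \<bullet> (z - x) \<le> 0"
    unfolding normal_cone_def by auto
  moreover have "f x + a \<bullet> (z - x) \<le> f z"
    using ab(2) unfolding subdiff_def by auto
  moreover have "v \<bullet> (x - z) = (- v) \<bullet> (z - x)"
    by (simp add: inner_diff_right)
  then have "v \<bullet> (x - z) = a \<bullet> (z - x) + b \<bullet> (z - x)"
    using ab(1) by (simp add: inner_add_left)
  ultimately show "v \<bullet> (x - z) \<le> f z - f x"
    by linarith
qed

lemma has_real_derivative_norm_diff_power2:
  fixes \<phi> :: "real \<Rightarrow> 'a::real_inner"
  assumes "(\<phi> has_vector_derivative v) (at t)"
  shows "((\<lambda>u. norm (\<phi> u - z)^2) has_real_derivative 2 * (v \<bullet> (\<phi> t - z))) (at t)"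
proof -
  have d: "((\<lambda>u. \<phi> u - z) has_derivative (\<lambda>h. h *\<^sub>R v)) (at t)"
    using assms unfolding has_vector_derivative_def by (auto intro!: derivative_eq_intros)
  have "((\<lambda>u. (\<phi> u - z) \<bullet> (\<phi> u - z)) has_derivative
      (\<lambda>h. (\<phi> t - z) \<bullet> (h *\<^sub>R v) + (h *\<^sub>R v) \<bullet> (\<phi> t - z))) (at t)"
    using has_derivative_inner[OF d d] by simp
  then have "((\<lambda>u. norm (\<phi> u - z)^2) has_derivative (\<lambda>h. (2 * (v \<bullet> (\<phi> t - z))) * h)) (at t)"
    by (simp add: power2_norm_eq_inner inner_commute algebra_simps)
  then show ?thesis
    by (simp add: has_field_derivative_def)
qed

lemma switching_interval:
  fixes s :: "nat \<Rightarrow> real"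
  assumes "s 0 = 0" "filterlim s at_top sequentially" "0 \<le> t"
  obtains j where "s j \<le> t" "t < s (Suc j)"
proof -
  have "eventually (\<lambda>j. t + 1 \<le> s j) sequentially"
    using assms(2) by (simp add: filterlim_at_top)
  then have "\<exists>j. t < s j"
    by (metis eventually_sequentially less_add_one order.strict_trans2 order_refl)
  define n where "n = (LEAST j. t < s j)"
  have "t < s n"
    unfolding n_def using \<open>\<exists>j. t < s j\<close> by (rule LeastI_ex)
  moreover have "n \<noteq> 0"
    using \<open>t < s n\<close> assms(1,3) by (cases n) auto
  then obtain j where "n = Suc j"
    using not0_implies_Suc by blast
  moreover have "\<not> t < s j"
    using not_less_Least[of j "\<lambda>j. t < s j"] \<open>n = Suc j\<close> unfolding n_def by simp
  ultimately show thesis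
    using that[of j] by (simp add: not_less)
qed

lemma emeasure_switching_mode_time:
  fixes s :: "nat \<Rightarrow> real"
  assumes s: "s 0 = 0" "strict_mono s" "filterlim s at_top sequentially"
    and const: "\<And>j t. t \<in> {s j..<s (Suc j)} \<Longrightarrow> \<sigma> t = \<sigma> (s j)"
  shows "emeasure lebesgue {t. 0 \<le> t \<and> \<sigma> t = q} =
    (\<Sum>j. ennreal (if \<sigma> (s j) = q then s (Suc j) - s j else 0))"
proof -
  define I where "I j = (if \<sigma> (s j) = q then {s j..<s (Suc j)} else {})" for j
  have s_le: "s j \<le> s (Suc j)" for j
    using strict_mono_less_eq[OF s(2)] by simp
  have "{t. 0 \<le> t \<and> \<sigma> t = q} = (\<Union>j. I j)"
  proof (intro equalityI subsetI)
    fix t assume "t \<in> {t. 0 \<le> t \<and> \<sigma> t = q}"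
    then have "0 \<le> t" "\<sigma> t = q"
      by auto
    obtain j where "s j \<le> t" "t < s (Suc j)"
      using switching_interval[OF s(1,3) \<open>0 \<le> t\<close>] .
    with const[of t j] \<open>\<sigma> t = q\<close> show "t \<in> (\<Union>j. I j)"
      by (auto simp: I_def)
  next
    fix t assume "t \<in> (\<Union>j. I j)"
    then obtain j where "\<sigma> (s j) = q" "s j \<le> t" "t < s (Suc j)"
      by (auto simp: I_def split: if_splits)
    moreover have "0 \<le> s j"
      using s(1) strict_mono_less_eq[OF s(2), of 0 j] by simp
    ultimately show "t \<in> {t. 0 \<le> t \<and> \<sigma> t = q}"
      using const[of t j] by simp
  qed
  moreover have "disjoint_family I"
  proof (rule disjoint_family_on_bisimulation[of "\<lambda>j. {s j..<s (Suc j)}"])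
    show "disjoint_family (\<lambda>j. {s j..<s (Suc j)})"
      unfolding disjoint_family_on_def
    proof (intro ballI impI)
      fix i j :: nat assume "i \<noteq> j"
      then have "Suc i \<le> j \<or> Suc j \<le> i"
        by linarith
      then have "s (Suc i) \<le> s j \<or> s (Suc j) \<le> s i"
        using strict_mono_less_eq[OF s(2)] by blast
      then show "{s i..<s (Suc i)} \<inter> {s j..<s (Suc j)} = {}"
        by auto
    qed
  qed (auto simp: I_def)
  moreover have "range I \<subseteq> sets lebesgue"
    by (auto simp: I_def)
  ultimately have "emeasure lebesgue {t. 0 \<le> t \<and> \<sigma> t = q} = (\<Sum>j. emeasure lebesgue (I j))"
    using suminf_emeasure[of I lebesgue] by simp
  moreover have "emeasure lebesgue (I j) = ennreal (if \<sigma> (s j) = q then s (Suc j) - s j else 0)" for j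
    using s_le[of j] by (simp add: I_def)
  ultimately show ?thesis
    by simp
qed

lemma emeasure_finite_if_AE_eventually_not:
  fixes T :: real and P :: "real \<Rightarrow> bool"
  assumes "AE t in lebesgue. T \<le> t \<longrightarrow> \<not> P t"
  shows "emeasure lebesgue {t. 0 \<le> t \<and> P t} < \<infinity>"
proof -
  obtain N where N: "N \<in> null_sets lebesgue" "\<And>t. t \<in> space lebesgue - N \<Longrightarrow> T \<le> t \<longrightarrow> \<not> P t"
    using AE_E3[OF assms] by blast
  have "{t. 0 \<le> t \<and> P t} \<subseteq> {0..T} \<union> N"
    using N(2) by force
  then have "emeasure lebesgue {t. 0 \<le> t \<and> P t} \<le> emeasure lebesgue ({0..T} \<union> N)"
    using N(1) by (intro emeasure_mono) auto
  also have "\<dots> \<le> emeasure lebesgue {0..T} + emeasure lebesgue N"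
    using N(1) by (intro emeasure_subadditive) auto
  also have "\<dots> < \<infinity>"
    using N(1) by (simp add: null_setsD1 emeasure_lborel_Icc_eq)
  finally show ?thesis .
qed

lemma summable_if_telescoping_bound:
  fixes V x :: "nat \<Rightarrow> real"
  assumes step: "\<And>j. J \<le> j \<Longrightarrow> V (Suc j) + c * x j \<le> V j"
    and "\<And>j. 0 \<le> V j" "\<And>j. 0 \<le> x j" "c > 0"
  shows "summable x"
proof (rule summableI_nonneg_bounded)
  fix K
  have telescoped: "c * (\<Sum>j\<in>{J..<K}. x j) \<le> V J" if "J \<le> K" for K
  proof -
    have "c * (\<Sum>j\<in>{J..<K}. x j) \<le> (\<Sum>j\<in>{J..<K}. V j - V (Suc j))"
      unfolding sum_distrib_left using step by (intro sum_mono) (simp add: algebra_simps)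
    also have "\<dots> = V J - V K"
      using sum_Suc_diff'[OF that, of V] unfolding sum_subtractf by linarith
    finally show ?thesis
      using assms(2)[of K] by linarith
  qed
  have "(\<Sum>j\<in>{J..<K}. x j) \<le> V J / c"
    using telescoped[of K] \<open>c > 0\<close> assms(2)[of J] by (cases "J \<le> K") (auto simp: field_simps)
  moreover have "sum x {..<K} \<le> sum x {..<J} + sum x {J..<K}"
  proof (cases "J \<le> K")
    case True
    then show ?thesis
      using sum.atLeastLessThan_concat[of 0 J K x] by (simp add: atLeast0LessThan)
  next
    case False
    then show ?thesis
      using assms(3) by (simp add: sum_mono2)
  qed
  ultimately show "sum x {..<K} \<le> sum x {..<J} + V J / c"
    by linarith
qed (fact assms(3))

lemma nonincreasing_bounded_below_small_drop:
  fixes V :: "real \<Rightarrow> real"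
  assumes mono: "\<And>s t. 0 \<le> s \<Longrightarrow> s \<le> t \<Longrightarrow> V t \<le> V s" and nonneg: "\<And>t. 0 \<le> t \<Longrightarrow> 0 \<le> V t"
    and "e > 0"
  obtains T where "0 \<le> T" "\<And>s t. T \<le> s \<Longrightarrow> s \<le> t \<Longrightarrow> V s - V t < e"
proof -
  define m where "m = Inf (V ` {0..})"
  have bdd: "bdd_below (V ` {0..})"
    using nonneg by (intro bdd_belowI[of _ 0]) auto
  then have m_le: "m \<le> V t" if "0 \<le> t" for t
    unfolding m_def using that by (auto intro: cInf_lower)
  have "V ` {0..} \<noteq> {}"
    by auto
  moreover have "Inf (V ` {0..}) < m + e"
    using \<open>e > 0\<close> by (simp add: m_def)
  ultimately obtain T where "0 \<le> T" "V T < m + e"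
    using cInf_less_iff[OF _ bdd] by auto
  show thesis
  proof (rule that)
    fix s t assume "T \<le> s" "s \<le> t"
    with \<open>0 \<le> T\<close> have "V s \<le> V T" "m \<le> V t"
      using mono[of T s] m_le[of t] by auto
    with \<open>V T < m + e\<close> show "V s - V t < e"
      by linarith
  qed (fact \<open>0 \<le> T\<close>)
qed

lemma eventually_nhds_closed_above_midpoint:
  fixes g :: "'a::t2_space \<Rightarrow> real"
  assumes "closed K" "isCont g y"
  shows "eventually (\<lambda>x. x \<in> K \<longrightarrow> y \<in> K \<and> (c < g y \<longrightarrow> g y + c < 2 * g x)) (nhds y)"
proof (cases "y \<in> K \<and> c < g y")
  case True
  have "(g \<longlongrightarrow> g y) (nhds y)"
    using assms(2) by (simp add: isCont_def tendsto_at_iff_tendsto_nhds)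
  then have "eventually (\<lambda>x. (g y + c) / 2 < g x) (nhds y)"
    using True by (intro order_tendstoD(1)) auto
  then show ?thesis
    by eventually_elim (use True in auto)
next
  case False
  show ?thesis
  proof (cases "y \<in> K")
    case True
    with False show ?thesis
      by simp
  next
    case False
    then have "eventually (\<lambda>x. x \<in> - K) (nhds y)"
      using assms(1) by (intro eventually_nhds_in_open) auto
    then show ?thesis
      by eventually_elim simp
  qed
qed

locale switched_subgradient_flow =
  fixes Q :: "'q set" and f :: "'q \<Rightarrow> 'a::euclidean_space \<Rightarrow> real" and C :: "'q \<Rightarrow> 'a set"
    and \<sigma> :: "real \<Rightarrow> 'q" and \<phi> :: "real \<Rightarrow> 'a"
  assumes finite_modes: "finite Q"
    and continuous_f: "\<And>q. q \<in> Q \<Longrightarrow> continuous_on UNIV (f q)"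
    and closed_C: "\<And>q. q \<in> Q \<Longrightarrow> closed (C q)"
    and switching: "switching_signal Q \<sigma>"
    and solution: "complete_solution (\<lambda>q. Mop (f q) (C q)) \<sigma> \<phi>"
begin

lemma mode_in_modes: "0 \<le> t \<Longrightarrow> \<sigma> t \<in> Q"
  using switching unfolding switching_signal_def by blast

lemma abs_continuous_on_solution:
  assumes "0 \<le> a" "a \<le> b"
  shows "abs_continuous_on a b \<phi>"
proof -
  have "abs_continuous_on 0 b \<phi>"
    using solution assms unfolding complete_solution_def loc_abs_continuous_def by simp
  then show ?thesis
    using assms(1) by (rule abs_continuous_on_subinterval) simp
qed

lemma AE_sqdist_derivative_le:
  "AE t in lebesgue. 0 \<le> t \<longrightarrow> \<phi> t \<in> C (\<sigma> t) \<and> (\<forall>z\<in>C (\<sigma> t).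
     \<exists>D. ((\<lambda>u. norm (\<phi> u - z)^2) has_real_derivative D) (at t) \<and> D \<le> 2 * (f (\<sigma> t) z - f (\<sigma> t) (\<phi> t)))"
proof -
  have "AE t in lebesgue. 0 \<le> t \<longrightarrow>
      (\<exists>v. (\<phi> has_vector_derivative v) (at t) \<and> - v \<in> Mop (f (\<sigma> t)) (C (\<sigma> t)) (\<phi> t))"
    using solution unfolding complete_solution_def by blast
  then show ?thesis
  proof eventually_elim
    case (elim t)
    show ?case
    proof
      assume "0 \<le> t"
      with elim obtain v where v: "(\<phi> has_vector_derivative v) (at t)"
          "- v \<in> Mop (f (\<sigma> t)) (C (\<sigma> t)) (\<phi> t)"
        by blast
      have "\<exists>D. ((\<lambda>u. norm (\<phi> u - z)^2) has_real_derivative D) (at t) \<and>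
          D \<le> 2 * (f (\<sigma> t) z - f (\<sigma> t) (\<phi> t))" if "z \<in> C (\<sigma> t)" for z
        using has_real_derivative_norm_diff_power2[OF v(1)] Mop_variational_inequality(2)[OF v(2) that]
        by (intro exI conjI) auto
      with Mop_variational_inequality(1)[OF v(2)] show "\<phi> t \<in> C (\<sigma> t) \<and> (\<forall>z\<in>C (\<sigma> t).
          \<exists>D. ((\<lambda>u. norm (\<phi> u - z)^2) has_real_derivative D) (at t) \<and>
            D \<le> 2 * (f (\<sigma> t) z - f (\<sigma> t) (\<phi> t)))"
        by blast
    qed
  qed
qed

lemma sqdist_antimono:
  assumes z: "z \<in> (\<Inter>q\<in>Q. argmin_on (f q) (C q))" and "0 \<le> s" "s \<le> t"
  shows "norm (\<phi> t - z)^2 \<le> norm (\<phi> s - z)^2"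
proof (rule abs_continuous_on_nonincreasing[where h = "\<lambda>u. norm (\<phi> u - z)^2"])
  show "abs_continuous_on s t (\<lambda>u. norm (\<phi> u - z)^2)"
    using abs_continuous_on_solution[OF assms(2,3)] by (rule abs_continuous_on_norm_diff_power2)
  show "AE u in lebesgue. s < u \<and> u < t \<longrightarrow>
      (\<exists>D. ((\<lambda>u. norm (\<phi> u - z)^2) has_real_derivative D) (at u) \<and> D \<le> 0)"
    using AE_sqdist_derivative_le
  proof eventually_elim
    case (elim u)
    show ?case
    proof
      assume "s < u \<and> u < t"
      with \<open>0 \<le> s\<close> have "0 \<le> u" "\<sigma> u \<in> Q"
        using mode_in_modes by auto
      with z elim have "\<phi> u \<in> C (\<sigma> u)" "z \<in> C (\<sigma> u)" "f (\<sigma> u) z \<le> f (\<sigma> u) (\<phi> u)"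
        by (auto simp: argmin_on_def)
      moreover obtain D where "((\<lambda>u. norm (\<phi> u - z)^2) has_real_derivative D) (at u)"
          "D \<le> 2 * (f (\<sigma> u) z - f (\<sigma> u) (\<phi> u))"
        using elim \<open>0 \<le> u\<close> \<open>z \<in> C (\<sigma> u)\<close> by blast
      ultimately show "\<exists>D. ((\<lambda>u. norm (\<phi> u - z)^2) has_real_derivative D) (at u) \<and> D \<le> 0"
        by (intro exI[of _ D]) auto
    qed
  qed
qed (fact \<open>s \<le> t\<close>)

lemma bounded_solution:
  assumes "z \<in> (\<Inter>q\<in>Q. argmin_on (f q) (C q))"
  shows "bounded (\<phi> ` {0..})"
proof -
  have "\<phi> t \<in> cball z (norm (\<phi> 0 - z))" if "0 \<le> t" for t
  proof -
    have "norm (\<phi> t - z) \<le> norm (\<phi> 0 - z)"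
      using sqdist_antimono[OF assms order_refl that] by (rule power2_le_imp_le) simp
    then show ?thesis
      by (simp add: dist_norm norm_minus_commute)
  qed
  then show ?thesis
    by (intro bounded_subset[OF bounded_cball]) auto
qed

text \<open>Within distance \<open>\<rho>\<close> of \<open>y\<close>, a mode whose constraint set is met has \<open>y \<in> C q\<close> and,
  unless \<open>y\<close> also minimizes \<open>f q\<close> on \<open>C q\<close>, keeps \<open>f q\<close> above the midpoint of \<open>f q y\<close> and
  \<open>f q z\<close>; either way \<open>|\<phi> - y|\<^sup>2 + 2 |\<phi> - z|\<^sup>2\<close> cannot increase while the flow stays there.\<close>

definition descent_radius :: "'a \<Rightarrow> 'a \<Rightarrow> real \<Rightarrow> bool" where
  "descent_radius y z \<rho> \<longleftrightarrow> \<rho> > 0 \<and> (\<forall>q\<in>Q. \<forall>x\<in>C q. dist x y < \<rho> \<longrightarrow>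
     y \<in> C q \<and> (f q z < f q y \<longrightarrow> f q y + f q z < 2 * f q x))"

lemma ex_descent_radius: "\<exists>\<rho>. descent_radius y z \<rho>"
proof -
  have "eventually (\<lambda>x. \<forall>q\<in>Q. x \<in> C q \<longrightarrow> y \<in> C q \<and> (f q z < f q y \<longrightarrow> f q y + f q z < 2 * f q x))
      (nhds y)"
  proof (rule eventually_ball_finite[OF finite_modes], rule ballI)
    fix q assume "q \<in> Q"
    then have "isCont (f q) y"
      using continuous_f continuous_on_eq_continuous_at open_UNIV by blast
    with closed_C[OF \<open>q \<in> Q\<close>] show "eventually (\<lambda>x. x \<in> C q \<longrightarrow> y \<in> C q \<and>
        (f q z < f q y \<longrightarrow> f q y + f q z < 2 * f q x)) (nhds y)"
      by (rule eventually_nhds_closed_above_midpoint)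
  qed
  then show ?thesis
    unfolding eventually_nhds_metric descent_radius_def by blast
qed

lemma energy_antimono_near:
  assumes z: "z \<in> (\<Inter>q\<in>Q. argmin_on (f q) (C q))" and \<rho>: "descent_radius y z \<rho>"
    and "0 \<le> s" "s \<le> t" and near: "\<And>u. s < u \<Longrightarrow> u < t \<Longrightarrow> dist (\<phi> u) y < \<rho>"
  shows "norm (\<phi> t - y)^2 + 2 * norm (\<phi> t - z)^2 \<le> norm (\<phi> s - y)^2 + 2 * norm (\<phi> s - z)^2"
proof (rule abs_continuous_on_nonincreasing[where h = "\<lambda>u. norm (\<phi> u - y)^2 + 2 * norm (\<phi> u - z)^2"])
  show "abs_continuous_on s t (\<lambda>u. norm (\<phi> u - y)^2 + 2 * norm (\<phi> u - z)^2)"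
    using abs_continuous_on_solution[OF assms(3,4)]
    by (intro abs_continuous_on_add abs_continuous_on_cmult abs_continuous_on_norm_diff_power2)
  show "AE u in lebesgue. s < u \<and> u < t \<longrightarrow> (\<exists>D. ((\<lambda>u. norm (\<phi> u - y)^2 + 2 * norm (\<phi> u - z)^2)
      has_real_derivative D) (at u) \<and> D \<le> 0)"
    using AE_sqdist_derivative_le
  proof eventually_elim
    case (elim u)
    show ?case
    proof
      assume u: "s < u \<and> u < t"
      with \<open>0 \<le> s\<close> have "0 \<le> u" and q: "\<sigma> u \<in> Q"
        using mode_in_modes by auto
      define q where "q = \<sigma> u"
      have "\<phi> u \<in> C q"
        using elim \<open>0 \<le> u\<close> by (simp add: q_def)
      then have y: "y \<in> C q" and above: "f q z < f q y \<Longrightarrow> f q y + f q z < 2 * f q (\<phi> u)"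
        using \<rho> near[OF conjunct1[OF u] conjunct2[OF u]] q unfolding descent_radius_def q_def by blast+
      have "z \<in> C q" and z_min: "\<And>x. x \<in> C q \<Longrightarrow> f q z \<le> f q x"
        using z q by (auto simp: argmin_on_def q_def)
      obtain D1 D2 where D1: "((\<lambda>v. norm (\<phi> v - y)^2) has_real_derivative D1) (at u)"
          "D1 \<le> 2 * (f q y - f q (\<phi> u))"
        and D2: "((\<lambda>v. norm (\<phi> v - z)^2) has_real_derivative D2) (at u)"
          "D2 \<le> 2 * (f q z - f q (\<phi> u))"
        using elim \<open>0 \<le> u\<close> y \<open>z \<in> C q\<close> unfolding q_def by blast
      have "D1 + 2 * D2 \<le> 0"
      proof (cases "f q z < f q y")
        case True
        with above D1(2) D2(2) show ?thesis
          by argo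
      next
        case False
        with z_min[OF y] z_min[OF \<open>\<phi> u \<in> C q\<close>] D1(2) D2(2) show ?thesis
          by argo
      qed
      moreover have "((\<lambda>v. norm (\<phi> v - y)^2 + 2 * norm (\<phi> v - z)^2) has_real_derivative D1 + 2 * D2) (at u)"
        by (intro DERIV_add DERIV_cmult D1(1) D2(1))
      ultimately show "\<exists>D. ((\<lambda>v. norm (\<phi> v - y)^2 + 2 * norm (\<phi> v - z)^2) has_real_derivative D) (at u) \<and> D \<le> 0"
        by blast
    qed
  qed
qed (fact \<open>s \<le> t\<close>)

lemma solution_trapped_near:
  assumes z: "z \<in> (\<Inter>q\<in>Q. argmin_on (f q) (C q))" and \<rho>: "descent_radius y z \<rho>"
    and "0 < \<eta>" "\<eta> \<le> \<rho>" "0 \<le> s" and start: "dist (\<phi> s) y < \<eta> / 2"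
    and drop: "\<And>t. s \<le> t \<Longrightarrow> norm (\<phi> s - z)^2 - norm (\<phi> t - z)^2 < \<eta>^2 / 4"
    and "s \<le> t"
  shows "dist (\<phi> t) y < \<eta>"
proof (rule ccontr)
  assume "\<not> dist (\<phi> t) y < \<eta>"
  have "continuous_on {s..t} (\<lambda>u. dist (\<phi> u) y)"
    using abs_continuous_on_imp_continuous_on[OF abs_continuous_on_solution[OF \<open>0 \<le> s\<close> \<open>s \<le> t\<close>]]
    by (intro continuous_on_dist continuous_on_const)
  moreover have "dist (\<phi> s) y < \<eta>"
    using start \<open>0 < \<eta>\<close> by linarith
  ultimately obtain \<tau> where \<tau>: "s < \<tau>" "dist (\<phi> \<tau>) y = \<eta>"
    and before: "\<And>u. s \<le> u \<Longrightarrow> u < \<tau> \<Longrightarrow> dist (\<phi> u) y < \<eta>"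
    using \<open>\<not> dist (\<phi> t) y < \<eta>\<close> \<open>s \<le> t\<close> by (auto elim!: first_exit_time[of s t "\<lambda>u. dist (\<phi> u) y" \<eta>])
  have "norm (\<phi> \<tau> - y)^2 + 2 * norm (\<phi> \<tau> - z)^2 \<le> norm (\<phi> s - y)^2 + 2 * norm (\<phi> s - z)^2"
  proof (rule energy_antimono_near[OF z \<rho> \<open>0 \<le> s\<close>])
    show "dist (\<phi> u) y < \<rho>" if "s < u" "u < \<tau>" for u
      using before[of u] that \<open>\<eta> \<le> \<rho>\<close> by simp
  qed (use \<tau> in simp)
  moreover have "norm (\<phi> s - y)^2 < (\<eta> / 2)^2"
    using start by (intro power_strict_mono) (auto simp: dist_norm)
  moreover have "norm (\<phi> \<tau> - y)^2 = \<eta>^2"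
    using \<tau>(2) by (simp add: dist_norm)
  moreover have "norm (\<phi> s - z)^2 - norm (\<phi> \<tau> - z)^2 < \<eta>^2 / 4"
    using drop \<tau>(1) by simp
  moreover have "0 < \<eta>^2"
    using \<open>0 < \<eta>\<close> by simp
  ultimately show False
    by (simp add: power_divide)
qed

lemma solution_convergent:
  assumes z: "z \<in> (\<Inter>q\<in>Q. argmin_on (f q) (C q))"
  obtains y where "(\<phi> \<longlongrightarrow> y) at_top"
proof -
  have "bounded (range (\<lambda>n. \<phi> (real n)))"
    using bounded_solution[OF z] by (rule bounded_subset) auto
  then obtain y r where r: "strict_mono r" and lim: "((\<lambda>n. \<phi> (real n)) \<circ> r) \<longlonglongrightarrow> y"
    using bounded_imp_convergent_subsequence by blast
  obtain \<rho> where \<rho>: "descent_radius y z \<rho>"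
    using ex_descent_radius by blast
  have "(\<phi> \<longlongrightarrow> y) at_top"
  proof (rule tendstoI)
    fix \<epsilon> :: real assume "\<epsilon> > 0"
    define \<eta> where "\<eta> = min \<epsilon> \<rho>"
    have \<eta>: "0 < \<eta>" "\<eta> \<le> \<rho>" "\<eta> \<le> \<epsilon>"
      using \<open>\<epsilon> > 0\<close> \<rho> by (auto simp: \<eta>_def descent_radius_def)
    obtain T where "0 \<le> T"
      and T: "\<And>s t. T \<le> s \<Longrightarrow> s \<le> t \<Longrightarrow> norm (\<phi> s - z)^2 - norm (\<phi> t - z)^2 < \<eta>^2 / 4"
      using nonincreasing_bounded_below_small_drop[of "\<lambda>t. norm (\<phi> t - z)^2" "\<eta>^2 / 4"]
        sqdist_antimono[OF z] \<open>0 < \<eta>\<close> by auto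
    have "filterlim (\<lambda>n. real (r n)) at_top sequentially"
      using filterlim_compose[OF filterlim_real_sequentially filterlim_subseq[OF r]] by (simp add: comp_def)
    then have "eventually (\<lambda>n. T \<le> real (r n)) sequentially"
      by (simp add: filterlim_at_top)
    moreover have "eventually (\<lambda>n. dist (\<phi> (real (r n))) y < \<eta> / 2) sequentially"
      using lim \<open>0 < \<eta>\<close> unfolding comp_def by (intro tendstoD) auto
    ultimately obtain n where n: "T \<le> real (r n)" "dist (\<phi> (real (r n))) y < \<eta> / 2"
      using eventually_happens'[OF trivial_limit_sequentially eventually_conj] by blast
    have "dist (\<phi> t) y < \<epsilon>" if "real (r n) \<le> t" for t
    proof -
      have "dist (\<phi> t) y < \<eta>"
        using solution_trapped_near[OF z \<rho> \<eta>(1,2) _ n(2) _ that] T n(1) \<open>0 \<le> T\<close> by auto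
      with \<eta>(3) show ?thesis
        by simp
    qed
    then show "eventually (\<lambda>t. dist (\<phi> t) y < \<epsilon>) at_top"
      unfolding eventually_at_top_linorder by blast
  qed
  then show thesis
    by (rule that)
qed

lemma limit_mem_C:
  assumes lim: "(\<phi> \<longlongrightarrow> y) at_top" and q: "q \<in> Q"
    and persistent: "emeasure lebesgue {t. 0 \<le> t \<and> \<sigma> t = q} = \<infinity>"
  shows "y \<in> C q"
proof (rule ccontr)
  assume "y \<notin> C q"
  then have "eventually (\<lambda>t. \<phi> t \<in> - C q) at_top"
    using lim closed_C[OF q] by (intro topological_tendstoD) auto
  then obtain T where T: "\<And>t. T \<le> t \<Longrightarrow> \<phi> t \<notin> C q"
    unfolding eventually_at_top_linorder by auto
  have "AE t in lebesgue. max T 0 \<le> t \<longrightarrow> \<not> \<sigma> t = q"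
    using AE_sqdist_derivative_le by eventually_elim (use T in auto)
  then have "emeasure lebesgue {t. 0 \<le> t \<and> \<sigma> t = q} < \<infinity>"
    by (rule emeasure_finite_if_AE_eventually_not)
  with persistent show False
    by simp
qed

lemma sqdist_decrease_while_above:
  assumes z: "z \<in> (\<Inter>q\<in>Q. argmin_on (f q) (C q))" and "q \<in> Q" "0 \<le> a" "a \<le> b"
    and above: "\<And>t. a < t \<Longrightarrow> t < b \<Longrightarrow> \<sigma> t = q \<and> f q z + c \<le> f q (\<phi> t)"
  shows "norm (\<phi> b - z)^2 + 2 * c * (b - a) \<le> norm (\<phi> a - z)^2"
proof -
  have "norm (\<phi> b - z)^2 - norm (\<phi> a - z)^2 \<le> (- 2 * c) * (b - a)"
  proof (rule abs_continuous_on_increment_le[where h = "\<lambda>u. norm (\<phi> u - z)^2"])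
    show "abs_continuous_on a b (\<lambda>u. norm (\<phi> u - z)^2)"
      using abs_continuous_on_solution[OF assms(3,4)] by (rule abs_continuous_on_norm_diff_power2)
    have "z \<in> C q"
      using z \<open>q \<in> Q\<close> by (auto simp: argmin_on_def)
    show "AE t in lebesgue. a < t \<and> t < b \<longrightarrow>
        (\<exists>D. ((\<lambda>u. norm (\<phi> u - z)^2) has_real_derivative D) (at t) \<and> D \<le> - 2 * c)"
      using AE_sqdist_derivative_le
    proof eventually_elim
      case (elim t)
      show ?case
      proof
        assume t: "a < t \<and> t < b"
        then have "\<sigma> t = q" "f q z + c \<le> f q (\<phi> t)" "0 \<le> t"
          using above \<open>0 \<le> a\<close> by auto
        then obtain D where "((\<lambda>u. norm (\<phi> u - z)^2) has_real_derivative D) (at t)"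
            "D \<le> 2 * (f q z - f q (\<phi> t))"
          using elim \<open>z \<in> C q\<close> by blast
        with \<open>f q z + c \<le> f q (\<phi> t)\<close> show "\<exists>D. ((\<lambda>u. norm (\<phi> u - z)^2) has_real_derivative D) (at t) \<and>
            D \<le> - 2 * c"
          by (intro exI[of _ D]) auto
      qed
    qed
  qed (fact \<open>a \<le> b\<close>)
  then show ?thesis
    by (simp add: algebra_simps)
qed

text \<open>On each switching interval of mode \<open>q\<close> after time \<open>T\<close>, \<open>|\<phi> - z|\<^sup>2\<close> drops by at least
  \<open>2 c\<close> times the length of the interval, so these lengths are summable.\<close>

lemma mode_time_finite_if_above_minimum:
  assumes z: "z \<in> (\<Inter>q\<in>Q. argmin_on (f q) (C q))" and q: "q \<in> Q" and "c > 0"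
    and above: "\<And>t. T \<le> t \<Longrightarrow> f q z + c \<le> f q (\<phi> t)"
  shows "emeasure lebesgue {t. 0 \<le> t \<and> \<sigma> t = q} < \<infinity>"
proof -
  obtain s where s: "s 0 = 0" "strict_mono s" "filterlim s at_top sequentially"
    and const: "\<And>j t. t \<in> {s j..<s (Suc j)} \<Longrightarrow> \<sigma> t = \<sigma> (s j)"
    using switching unfolding switching_signal_def by blast
  have s_nonneg: "0 \<le> s j" and s_le: "s j \<le> s (Suc j)" for j
    using strict_mono_less_eq[OF s(2), of 0 j] strict_mono_less_eq[OF s(2), of j "Suc j"] s(1) by simp_all
  obtain J where J: "T \<le> s J"
    using s(3) unfolding filterlim_at_top eventually_sequentially by blast
  define x where "x j = (if \<sigma> (s j) = q then s (Suc j) - s j else 0)" for j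
  have x_nonneg: "0 \<le> x j" for j
    using s_le by (simp add: x_def)
  have "summable x"
  proof (rule summable_if_telescoping_bound[where V = "\<lambda>j. norm (\<phi> (s j) - z)^2" and J = J])
    fix j assume "J \<le> j"
    show "norm (\<phi> (s (Suc j)) - z)^2 + 2 * c * x j \<le> norm (\<phi> (s j) - z)^2"
    proof (cases "\<sigma> (s j) = q")
      case True
      have "\<sigma> t = q \<and> f q z + c \<le> f q (\<phi> t)" if "s j < t" "t < s (Suc j)" for t
      proof
        show "\<sigma> t = q"
          using const[of t j] that True by simp
        have "T \<le> t"
          using J strict_mono_less_eq[OF s(2)] \<open>J \<le> j\<close> that by (meson less_imp_le order_trans)
        then show "f q z + c \<le> f q (\<phi> t)"
          by (rule above)
      qed
      then show ?thesis
        using sqdist_decrease_while_above[OF z q s_nonneg s_le] True by (simp add: x_def)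
    next
      case False
      then show ?thesis
        using sqdist_antimono[OF z s_nonneg s_le] by (simp add: x_def)
    qed
  qed (use \<open>c > 0\<close> x_nonneg in auto)
  with x_nonneg have "(\<Sum>j. ennreal (x j)) = ennreal (\<Sum>j. x j)"
    by (intro suminf_ennreal2)
  moreover have "emeasure lebesgue {t. 0 \<le> t \<and> \<sigma> t = q} = (\<Sum>j. ennreal (x j))"
    unfolding x_def by (rule emeasure_switching_mode_time[where \<sigma> = \<sigma> and q = q, OF s const])
  ultimately show ?thesis
    by simp
qed

lemma limit_le_minimum:
  assumes lim: "(\<phi> \<longlongrightarrow> y) at_top" and z: "z \<in> (\<Inter>q\<in>Q. argmin_on (f q) (C q))" and q: "q \<in> Q"
    and persistent: "emeasure lebesgue {t. 0 \<le> t \<and> \<sigma> t = q} = \<infinity>"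
  shows "f q y \<le> f q z"
proof (rule ccontr)
  assume "\<not> f q y \<le> f q z"
  define c where "c = (f q y - f q z) / 2"
  have "c > 0" "f q z + c < f q y"
    using \<open>\<not> f q y \<le> f q z\<close> unfolding c_def by argo+
  have "((\<lambda>t. f q (\<phi> t)) \<longlongrightarrow> f q y) at_top"
    using continuous_f[OF q] lim by (rule continuous_on_tendsto_compose) auto
  then have "eventually (\<lambda>t. f q z + c < f q (\<phi> t)) at_top"
    using \<open>f q z + c < f q y\<close> by (rule order_tendstoD(1))
  then obtain T where "\<And>t. T \<le> t \<Longrightarrow> f q z + c \<le> f q (\<phi> t)"
    unfolding eventually_at_top_linorder by (meson less_imp_le)
  with z q \<open>c > 0\<close> have "emeasure lebesgue {t. 0 \<le> t \<and> \<sigma> t = q} < \<infinity>"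
    by (rule mode_time_finite_if_above_minimum)
  with persistent show False
    by simp
qed

lemma limit_mem_persistent_argmin:
  assumes lim: "(\<phi> \<longlongrightarrow> y) at_top" and z: "z \<in> (\<Inter>q\<in>Q. argmin_on (f q) (C q))" and q: "q \<in> Q"
    and persistent: "emeasure lebesgue {t. 0 \<le> t \<and> \<sigma> t = q} = \<infinity>"
  shows "y \<in> argmin_on (f q) (C q)"
  using limit_mem_C[OF lim q persistent] limit_le_minimum[OF assms] z q
  unfolding argmin_on_def by (auto intro: order_trans)

end

theorem corollary1:
  fixes p :: nat
    and f :: "nat \<Rightarrow> real ^ 'n \<Rightarrow> real"
    and C :: "nat \<Rightarrow> (real ^ 'n) set"
    and \<sigma> :: "real \<Rightarrow> nat"
    and \<phi> :: "real \<Rightarrow> real ^ 'n"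
  assumes conv_f: "\<And>q. q \<in> {1..p} \<Longrightarrow> convex_on UNIV (f q)"
    and C_ne: "\<And>q. q \<in> {1..p} \<Longrightarrow> C q \<noteq> {}"
    and C_closed: "\<And>q. q \<in> {1..p} \<Longrightarrow> closed (C q)"
    and C_convex: "\<And>q. q \<in> {1..p} \<Longrightarrow> convex (C q)"
    and A_ne: "(\<Inter>q\<in>{1..p}. argmin_on (f q) (C q)) \<noteq> {}"
    and sig: "switching_signal {1..p} \<sigma>"
    and sol: "complete_solution (\<lambda>q. Mop (f q) (C q)) \<sigma> \<phi>"
  shows "\<exists>L \<in> (\<Inter>q\<in>{q \<in> {1..p}. emeasure lebesgue {t. 0 \<le> t \<and> \<sigma> t = q} = \<infinity>}.
                    argmin_on (f q) (C q)).
           (\<phi> \<longlongrightarrow> L) at_top"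
proof -
  interpret switched_subgradient_flow "{1..p}" f C \<sigma> \<phi>
  proof
    show "continuous_on UNIV (f q)" if "q \<in> {1..p}" for q
      using convex_on_continuous[OF open_UNIV conv_f[OF that]] .
  qed (use C_closed sig sol in auto)
  obtain z where z: "z \<in> (\<Inter>q\<in>{1..p}. argmin_on (f q) (C q))"
    using A_ne by blast
  obtain y where lim: "(\<phi> \<longlongrightarrow> y) at_top"
    using solution_convergent[OF z] .
  have "y \<in> (\<Inter>q\<in>{q \<in> {1..p}. emeasure lebesgue {t. 0 \<le> t \<and> \<sigma> t = q} = \<infinity>}.
      argmin_on (f q) (C q))"
    using limit_mem_persistent_argmin[OF lim z] by blast
  with lim show ?thesis
    by blast
qed

end
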